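(* Let $n\ge1$ and $d\ge0$. The set $\mathcal D_{d,n}$ of admissible pairs is a doset on $\mathcal P_{d,n}$, and the poset $\mathcal P_{d,n}$ is a distributive lattice.
   Context: $\langle n\rangle=\{\bar n<\dots<\bar1<1<\dots<n\}$ with $\bar\imath=-i$; $\binom{\langle n\rangle}{n}$ is the set of $n$-element subsets $\alpha=\{\alpha_1<\dots<\alpha_n\}$ of $\langle n\rangle$. Let $\binom{\langle n\rangle}{n}_d:=\{\alpha^{(a)}\mid\alpha\in\binom{\langle n\rangle}{n},\ 0\le a\le d\}$, partially ordered by $\alpha^{(a)}\le\beta^{(b)}$ iff $a\le b$ and $\alpha_i\le\beta_{b-a+i}$ for $i=1,\dots,n-b+a$. An element $\alpha\in\binom{\langle n\rangle}{n}$ is admissible if for each $i\in[n]$ exactly one of $i,\bar\imath$ lies in $\alpha$; $\mathcal P_{d,n}$ is the subposet of $\binom{\langle n\rangle}{n}_d$ consisting of the $\alpha^{(a)}$ with $\alpha$ admissible. A cover $\alpha^{(a)}\lessdot\beta^{(a)}$ in $\mathcal P_{d,n}$ is of type (1) if $\alpha$ and $\beta$ have the same number of negative elements. A pair $(\alpha^{(a)},\beta^{(a)})$ with $\alpha^{(a)}<\beta^{(a)}$ is admissible if there is a saturated chain $\alpha^{(a)}=\gamma_0\lessdot\gamma_1\lessdot\dots\lessdot\gamma_s=\beta^{(a)}$ in $\mathcal P_{d,n}$ all of whose covers are of type (1); $\mathcal D_{d,n}$ consists of the admissible pairs together with the diagonal pairs $(\alpha^{(a)},\alpha^{(a)})$.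 A doset on a poset $\mathcal P$ is a set $\mathcal D$ with $\Delta_{\mathcal P}\subseteq\mathcal D\subseteq\{(x,y)\in\mathcal P\times\mathcal P\mid x\le y\}$ such that whenever $x\le y\le z$, $(x,z)\in\mathcal D$ iff both $(x,y)\in\mathcal D$ and $(y,z)\in\mathcal D$. *)

theory Defs
  imports Main
begin

definition signed_set :: "nat \<Rightarrow> int set" where
  "signed_set n = {i. i \<noteq> 0 \<and> \<bar>i\<bar> \<le> int n}"

text \<open>An element alpha^(a) of binom(<n>,n)_d is represented as the pair (alpha, a).\<close>
type_synonym elt = "int set \<times> nat"

text \<open>The i-th smallest element of alpha (0-based index i, i.e. alpha_(i+1)).\<close>
definition ent :: "int set \<Rightarrow> nat \<Rightarrow> int" where
  "ent A i = sorted_list_of_set A ! i"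

definition binom_d :: "nat \<Rightarrow> nat \<Rightarrow> elt set" where
  "binom_d n d = {(A, a). A \<subseteq> signed_set n \<and> card A = n \<and> a \<le> d}"

definition leq :: "nat \<Rightarrow> elt \<Rightarrow> elt \<Rightarrow> bool" where
  "leq n x y \<longleftrightarrow> snd x \<le> snd y \<and>
     (\<forall>i. i < n - (snd y - snd x) \<longrightarrow> ent (fst x) i \<le> ent (fst y) (snd y - snd x + i))"

definition admissible :: "nat \<Rightarrow> int set \<Rightarrow> bool" where
  "admissible n A \<longleftrightarrow> (\<forall>i::nat. 1 \<le> i \<and> i \<le> n \<longrightarrow> ((int i \<in> A) \<noteq> (- int i \<in> A)))"

definition P :: "nat \<Rightarrow> nat \<Rightarrow> elt set" where
  "P d n = {x \<in> binom_d n d. admissible n (fst x)}"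

definition lt :: "nat \<Rightarrow> elt \<Rightarrow> elt \<Rightarrow> bool" where
  "lt n x y \<longleftrightarrow> leq n x y \<and> x \<noteq> y"

definition covers :: "nat \<Rightarrow> nat \<Rightarrow> elt \<Rightarrow> elt \<Rightarrow> bool" where
  "covers d n x y \<longleftrightarrow> x \<in> P d n \<and> y \<in> P d n \<and> lt n x y \<and>
     \<not> (\<exists>z \<in> P d n. lt n x z \<and> lt n z y)"

definition negs :: "int set \<Rightarrow> nat" where
  "negs A = card {i \<in> A. i < 0}"

definition cover_type1 :: "nat \<Rightarrow> nat \<Rightarrow> elt \<Rightarrow> elt \<Rightarrow> bool" where
  "cover_type1 d n x y \<longleftrightarrow> covers d n x y \<and> snd x = snd y \<and> negs (fst x) = negs (fst y)"

definition admissible_pair :: "nat \<Rightarrow> nat \<Rightarrow> elt \<Rightarrow> elt \<Rightarrow> bool" where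
  "admissible_pair d n x y \<longleftrightarrow> x \<in> P d n \<and> y \<in> P d n \<and> snd x = snd y \<and> lt n x y \<and>
     (\<exists>gs. length gs \<ge> 2 \<and> hd gs = x \<and> last gs = y \<and>
        (\<forall>i. Suc i < length gs \<longrightarrow> cover_type1 d n (gs ! i) (gs ! Suc i)))"

definition D :: "nat \<Rightarrow> nat \<Rightarrow> (elt \<times> elt) set" where
  "D d n = {(x, y). admissible_pair d n x y} \<union> {(x, x) | x. x \<in> P d n}"

definition doset :: "'a set \<Rightarrow> ('a \<Rightarrow> 'a \<Rightarrow> bool) \<Rightarrow> ('a \<times> 'a) set \<Rightarrow> bool" where
  "doset S le DD \<longleftrightarrow>
     {(x, x) | x. x \<in> S} \<subseteq> DD \<and> DD \<subseteq> {(x, y). x \<in> S \<and> y \<in> S \<and> le x y} \<and>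
     (\<forall>x\<in>S. \<forall>y\<in>S. \<forall>z\<in>S. le x y \<and> le y z \<longrightarrow>
        ((x, z) \<in> DD \<longleftrightarrow> (x, y) \<in> DD \<and> (y, z) \<in> DD))"

definition partial_order_on' :: "'a set \<Rightarrow> ('a \<Rightarrow> 'a \<Rightarrow> bool) \<Rightarrow> bool" where
  "partial_order_on' S le \<longleftrightarrow>
     (\<forall>x\<in>S. le x x) \<and> (\<forall>x\<in>S. \<forall>y\<in>S. le x y \<and> le y x \<longrightarrow> x = y) \<and>
     (\<forall>x\<in>S. \<forall>y\<in>S. \<forall>z\<in>S. le x y \<and> le y z \<longrightarrow> le x z)"

definition is_join :: "'a set \<Rightarrow> ('a \<Rightarrow> 'a \<Rightarrow> bool) \<Rightarrow> 'a \<Rightarrow> 'a \<Rightarrow> 'a \<Rightarrow> bool" where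
  "is_join S le x y j \<longleftrightarrow> j \<in> S \<and> le x j \<and> le y j \<and> (\<forall>u\<in>S. le x u \<and> le y u \<longrightarrow> le j u)"

definition is_meet :: "'a set \<Rightarrow> ('a \<Rightarrow> 'a \<Rightarrow> bool) \<Rightarrow> 'a \<Rightarrow> 'a \<Rightarrow> 'a \<Rightarrow> bool" where
  "is_meet S le x y m \<longleftrightarrow> m \<in> S \<and> le m x \<and> le m y \<and> (\<forall>u\<in>S. le u x \<and> le u y \<longrightarrow> le u m)"

definition distrib_lattice_on :: "'a set \<Rightarrow> ('a \<Rightarrow> 'a \<Rightarrow> bool) \<Rightarrow> bool" where
  "distrib_lattice_on S le \<longleftrightarrow> partial_order_on' S le \<and>
     (\<forall>x\<in>S. \<forall>y\<in>S. (\<exists>j. is_join S le x y j) \<and> (\<exists>m. is_meet S le x y m)) \<and>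
     (\<forall>x\<in>S. \<forall>y\<in>S. \<forall>z\<in>S. \<forall>s t v u w.
        is_join S le y z s \<and> is_meet S le x s u \<and> is_meet S le x y t \<and>
        is_meet S le x z v \<and> is_join S le t v w \<longrightarrow> u = w)"

end

theory Submission
  imports Defs
begin

(*
  Encode alpha^(a) by its height function  v |-> a - #{w : alpha. w <= v}  on the window
  -n-1 <= v <= n.  Then alpha^(a) <= beta^(b) is exactly the pointwise order of height functions,
  and the height functions of P_{d,n} are characterised by local conditions (steps of size 0 or 1,
  a reflection symmetry expressing admissibility, and 0 <= a <= d) that are stable under pointwise
  max and min.  So P_{d,n} is a sublattice of a lattice of integer functions, hence distributive.

  Along the order of P_{d,n} the level a increases and, at fixed level, the number of negative
  entries decreases.  Hence a pair x < y is admissible iff both invariants agree at x and y: a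
  saturated chain from x to y exists in the finite poset, and each of its covers preserves both.
  A relation of the form "x <= y with equal invariant" is a doset.
*)

section \<open>Sublattices of function lattices\<close>

locale pointwise_embedding =
  fixes S :: "'a set" and le :: "'a \<Rightarrow> 'a \<Rightarrow> bool"
    and V :: "'b set" and f :: "'a \<Rightarrow> 'b \<Rightarrow> 'c::linorder"
  assumes le_iff: "x \<in> S \<Longrightarrow> y \<in> S \<Longrightarrow> le x y \<longleftrightarrow> (\<forall>v \<in> V. f x v \<le> f y v)"
    and eq_if_eq_on: "x \<in> S \<Longrightarrow> y \<in> S \<Longrightarrow> \<forall>v \<in> V. f x v = f y v \<Longrightarrow> x = y"
    and max_closed: "x \<in> S \<Longrightarrow> y \<in> S \<Longrightarrow> \<exists>z \<in> S. \<forall>v \<in> V. f z v = max (f x v) (f y v)"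
    and min_closed: "x \<in> S \<Longrightarrow> y \<in> S \<Longrightarrow> \<exists>z \<in> S. \<forall>v \<in> V. f z v = min (f x v) (f y v)"
begin

lemma partial_order: "partial_order_on' S le"
  unfolding partial_order_on'_def
proof (intro conjI ballI impI)
  fix x y assume "x \<in> S" "y \<in> S" "le x y \<and> le y x"
  then have "\<forall>v \<in> V. f x v = f y v" using le_iff by (simp add: order.eq_iff)
  then show "x = y" using eq_if_eq_on \<open>x \<in> S\<close> \<open>y \<in> S\<close> by blast
next
  fix x y z assume "x \<in> S" "y \<in> S" "z \<in> S" "le x y \<and> le y z"
  then have "\<forall>v \<in> V. f x v \<le> f z v" using le_iff by (fastforce intro: order_trans)
  then show "le x z" using le_iff \<open>x \<in> S\<close> \<open>z \<in> S\<close> by blast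
qed (simp add: le_iff)

lemma is_join_iff:
  assumes x: "x \<in> S" and y: "y \<in> S"
  shows "is_join S le x y j \<longleftrightarrow> j \<in> S \<and> (\<forall>v \<in> V. f j v = max (f x v) (f y v))"
proof
  assume j: "is_join S le x y j"
  obtain z where z: "z \<in> S" "\<forall>v \<in> V. f z v = max (f x v) (f y v)"
    using max_closed[OF x y] by blast
  have jS: "j \<in> S" and "le x j" "le y j" using j by (auto simp: is_join_def)
  then have lower: "\<forall>v \<in> V. max (f x v) (f y v) \<le> f j v"
    using le_iff[OF x jS] le_iff[OF y jS] by simp
  have "le j z" using j z le_iff[OF x z(1)] le_iff[OF y z(1)] by (simp add: is_join_def)
  then have "\<forall>v \<in> V. f j v \<le> max (f x v) (f y v)"
    using le_iff[OF jS z(1)] z(2) by simp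
  with jS lower show "j \<in> S \<and> (\<forall>v \<in> V. f j v = max (f x v) (f y v))"
    by (auto intro: antisym)
next
  assume "j \<in> S \<and> (\<forall>v \<in> V. f j v = max (f x v) (f y v))"
  then show "is_join S le x y j"
    using le_iff[OF x] le_iff[OF y] le_iff[of j] by (simp add: is_join_def)
qed

lemma is_meet_iff:
  assumes x: "x \<in> S" and y: "y \<in> S"
  shows "is_meet S le x y m \<longleftrightarrow> m \<in> S \<and> (\<forall>v \<in> V. f m v = min (f x v) (f y v))"
proof
  assume m: "is_meet S le x y m"
  obtain z where z: "z \<in> S" "\<forall>v \<in> V. f z v = min (f x v) (f y v)"
    using min_closed[OF x y] by blast
  have mS: "m \<in> S" and "le m x" "le m y" using m by (auto simp: is_meet_def)
  then have upper: "\<forall>v \<in> V. f m v \<le> min (f x v) (f y v)"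
    using le_iff[OF mS x] le_iff[OF mS y] by simp
  have "le z m" using m z le_iff[OF z(1) x] le_iff[OF z(1) y] by (simp add: is_meet_def)
  then have "\<forall>v \<in> V. min (f x v) (f y v) \<le> f m v"
    using le_iff[OF z(1) mS] z(2) by simp
  with mS upper show "m \<in> S \<and> (\<forall>v \<in> V. f m v = min (f x v) (f y v))"
    by (auto intro: antisym)
next
  assume "m \<in> S \<and> (\<forall>v \<in> V. f m v = min (f x v) (f y v))"
  then show "is_meet S le x y m"
    using le_iff[OF _ x] le_iff[OF _ y] le_iff[of _ m] by (simp add: is_meet_def)
qed

lemma distrib_lattice: "distrib_lattice_on S le"
  unfolding distrib_lattice_on_def
proof (intro conjI ballI allI impI)
  fix x y assume xy: "x \<in> S" "y \<in> S"
  show "\<exists>j. is_join S le x y j" using max_closed[OF xy] is_join_iff[OF xy] by blast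
  show "\<exists>m. is_meet S le x y m" using min_closed[OF xy] is_meet_iff[OF xy] by blast
next
  fix x y z s t v u w
  assume S: "x \<in> S" "y \<in> S" "z \<in> S"
    and H: "is_join S le y z s \<and> is_meet S le x s u \<and> is_meet S le x y t \<and>
      is_meet S le x z v \<and> is_join S le t v w"
  then have "s \<in> S" "t \<in> S" "v \<in> S" "u \<in> S" "w \<in> S"
    by (auto simp: is_join_def is_meet_def)
  moreover have "\<forall>q \<in> V. f u q = f w q"
  proof
    fix q assume "q \<in> V"
    then show "f u q = f w q"
      using is_join_iff[OF S(2,3)] is_meet_iff[OF S(1) \<open>s \<in> S\<close>] is_meet_iff[OF S(1,2)]
        is_meet_iff[OF S(1,3)] is_join_iff[OF \<open>t \<in> S\<close> \<open>v \<in> S\<close>] H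
      by (simp add: min_max_distrib2)
  qed
  ultimately show "u = w" by (blast intro: eq_if_eq_on)
qed (rule partial_order)

end

section \<open>Saturated chains and dosets\<close>

definition covering :: "'a set \<Rightarrow> ('a \<Rightarrow> 'a \<Rightarrow> bool) \<Rightarrow> 'a \<Rightarrow> 'a \<Rightarrow> bool" where
  "covering S prec u v \<longleftrightarrow> u \<in> S \<and> v \<in> S \<and> prec u v \<and> \<not> (\<exists>w \<in> S. prec u w \<and> prec w v)"

lemma saturated_chain_exists:
  fixes prec :: "'a \<Rightarrow> 'a \<Rightarrow> bool"
  assumes fin: "finite S"
    and irrefl: "\<And>x. x \<in> S \<Longrightarrow> \<not> prec x x"
    and trans: "\<And>x y z. x \<in> S \<Longrightarrow> y \<in> S \<Longrightarrow> z \<in> S \<Longrightarrow> prec x y \<Longrightarrow> prec y z \<Longrightarrow> prec x z"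
    and "x \<in> S" "y \<in> S" "prec x y"
  shows "\<exists>zs. successively (covering S prec) (x # zs @ [y])"
  using assms(4-6)
proof (induction "card {w \<in> S. prec x w \<and> prec w y}" arbitrary: x y rule: less_induct)
  case less
  show ?case
  proof (cases "\<exists>w \<in> S. prec x w \<and> prec w y")
    case False
    then have "successively (covering S prec) (x # [] @ [y])"
      using less.prems by (simp add: covering_def)
    then show ?thesis by blast
  next
    case True
    then obtain w where w: "w \<in> S" "prec x w" "prec w y" by blast
    let ?between = "\<lambda>a b. {u \<in> S. prec a u \<and> prec u b}"
    have finite_between: "finite (?between a b)" for a b using fin by simp
    have "?between x w \<subset> ?between x y"
      using w less.prems irrefl trans[of _ w y] by auto
    then have "card (?between x w) < card (?between x y)"
      by (rule psubset_card_mono[OF finite_between])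
    then obtain zs1 where zs1: "successively (covering S prec) (x # zs1 @ [w])"
      using less.hyps[OF _ less.prems(1) w(1,2)] by blast
    have "?between w y \<subset> ?between x y"
      using w less.prems irrefl trans[of x w] by auto
    then have "card (?between w y) < card (?between x y)"
      by (rule psubset_card_mono[OF finite_between])
    then obtain zs2 where zs2: "successively (covering S prec) (w # zs2 @ [y])"
      using less.hyps[OF _ w(1) less.prems(2) w(3)] by blast
    then have "covering S prec w (hd (zs2 @ [y]))" "successively (covering S prec) (zs2 @ [y])"
      by (simp_all add: successively_Cons)
    with zs1 have "successively (covering S prec) ((x # zs1 @ [w]) @ (zs2 @ [y]))"
      unfolding successively_append_iff by simp
    then have "successively (covering S prec) (x # (zs1 @ w # zs2) @ [y])" by simp
    then show ?thesis by blast
  qed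
qed

lemma sorted_wrt_if_successively_covering:
  assumes trans: "\<And>x y z. x \<in> S \<Longrightarrow> y \<in> S \<Longrightarrow> z \<in> S \<Longrightarrow> prec x y \<Longrightarrow> prec y z \<Longrightarrow> prec x z"
  shows "successively (covering S prec) (x # xs) \<Longrightarrow> x \<in> S \<Longrightarrow>
    set (x # xs) \<subseteq> S \<and> sorted_wrt prec (x # xs)"
proof (induction xs arbitrary: x)
  case (Cons a xs)
  have a: "a \<in> S" "prec x a" using Cons.prems(1) by (simp_all add: covering_def)
  have IH: "set (a # xs) \<subseteq> S \<and> sorted_wrt prec (a # xs)"
    using Cons.IH[of a] Cons.prems(1) a(1) by simp
  then have "\<forall>z \<in> set xs. prec x z"
    using trans[OF Cons.prems(2) a(1)] a(2) by auto
  then show ?case using Cons.prems(2) a IH by simp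
qed simp

lemma successively_eq_imp_hd_eq_last: "successively (=) xs \<Longrightarrow> xs \<noteq> [] \<Longrightarrow> hd xs = last xs"
  by (induction xs rule: induct_list012) auto

lemma doset_same_invariant:
  assumes po: "partial_order_on' S le"
    and convex: "\<And>x y z. x \<in> S \<Longrightarrow> y \<in> S \<Longrightarrow> z \<in> S \<Longrightarrow> le x y \<Longrightarrow> le y z \<Longrightarrow>
      \<phi> x = \<phi> z \<Longrightarrow> \<phi> y = \<phi> x"
  shows "doset S le {(x, y). x \<in> S \<and> y \<in> S \<and> le x y \<and> \<phi> x = \<phi> y}"
  unfolding doset_def
proof (intro conjI ballI impI)
  show "{(x, x) |x. x \<in> S} \<subseteq> {(x, y). x \<in> S \<and> y \<in> S \<and> le x y \<and> \<phi> x = \<phi> y}"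
    using po by (auto simp: partial_order_on'_def)
next
  fix x y z assume S: "x \<in> S" "y \<in> S" "z \<in> S" and le: "le x y \<and> le y z"
  then have "le x z" using po unfolding partial_order_on'_def by blast
  with S le show "(x, z) \<in> {(x, y). x \<in> S \<and> y \<in> S \<and> le x y \<and> \<phi> x = \<phi> y} \<longleftrightarrow>
    (x, y) \<in> {(x, y). x \<in> S \<and> y \<in> S \<and> le x y \<and> \<phi> x = \<phi> y} \<and>
    (y, z) \<in> {(x, y). x \<in> S \<and> y \<in> S \<and> le x y \<and> \<phi> x = \<phi> y}"
    using convex[of x y z] by auto
qed auto

section \<open>Counting the entries of a subset of \<open>\<langle>n\<rangle>\<close>\<close>

definition count_le :: "int set \<Rightarrow> int \<Rightarrow> nat" where
  "count_le A v = card {w \<in> A. w \<le> v}"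

lemma finite_signed_set: "finite (signed_set n)"
  by (rule finite_subset[of _ "{- int n .. int n}"]) (auto simp: signed_set_def)

lemma P_memD:
  assumes "x \<in> P d n"
  shows "fst x \<subseteq> signed_set n" "finite (fst x)" "card (fst x) = n" "snd x \<le> d"
    "admissible n (fst x)"
  using assms finite_subset[OF _ finite_signed_set] by (auto simp: P_def binom_d_def)

lemma count_le_step:
  assumes "finite A"
  shows "count_le A v = count_le A (v - 1) + (if v \<in> A then 1 else 0)"
proof -
  have "{w \<in> A. w \<le> v} = (if v \<in> A then insert v else id) {w \<in> A. w \<le> v - 1}"
    by (auto simp: order_le_less)
  then show ?thesis
    using assms by (simp add: count_le_def)
qed

lemma count_le_mono: "finite A \<Longrightarrow> v \<le> w \<Longrightarrow> count_le A v \<le> count_le A w"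
  unfolding count_le_def by (rule card_mono) auto

lemma count_le_below:
  "A \<subseteq> signed_set n \<Longrightarrow> v \<le> - int n - 1 \<Longrightarrow> count_le A v = 0"
proof -
  assume "A \<subseteq> signed_set n" "v \<le> - int n - 1"
  then have "{w \<in> A. w \<le> v} = {}" by (force simp: signed_set_def)
  then show ?thesis unfolding count_le_def by (metis card.empty)
qed

lemma count_le_top: "A \<subseteq> signed_set n \<Longrightarrow> count_le A (int n) = card A"
  unfolding count_le_def by (rule arg_cong[where f = card]) (auto simp: signed_set_def)

lemma count_le_le_card: "finite A \<Longrightarrow> count_le A v \<le> card A"
  unfolding count_le_def by (rule card_mono) auto

lemma ent_mem: "finite A \<Longrightarrow> i < card A \<Longrightarrow> ent A i \<in> A"
  by (metis ent_def length_sorted_list_of_set nth_mem set_sorted_list_of_set)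

lemma ent_strict_mono: "finite A \<Longrightarrow> strict_mono_on {..<card A} (ent A)"
  unfolding ent_def
  by (rule strict_mono_onI, rule sorted_wrt_nth_less[OF strict_sorted_list_of_set]) auto

lemma ent_surj: "finite A \<Longrightarrow> w \<in> A \<Longrightarrow> \<exists>j < card A. ent A j = w"
  by (metis ent_def in_set_conv_nth length_sorted_list_of_set set_sorted_list_of_set)

lemma count_le_ent:
  assumes A: "finite A" and i: "i < card A"
  shows "count_le A (ent A i) = Suc i"
proof -
  have mono: "strict_mono_on {..<card A} (ent A)" using ent_strict_mono[OF A] .
  have "{w \<in> A. w \<le> ent A i} = ent A ` {..i}"
  proof (intro set_eqI iffI)
    fix w assume "w \<in> {w \<in> A. w \<le> ent A i}"
    then obtain j where j: "j < card A" "ent A j = w" "ent A j \<le> ent A i"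
      using ent_surj[OF A] by blast
    then have "j \<le> i"
      using i strict_mono_onD[OF mono] by (meson lessThan_iff not_le)
    then show "w \<in> ent A ` {..i}" using j(2) by blast
  next
    fix w assume "w \<in> ent A ` {..i}"
    then show "w \<in> {w \<in> A. w \<le> ent A i}"
      using i ent_mem[OF A] strict_mono_on_leD[OF mono] by fastforce
  qed
  moreover have "inj_on (ent A) {..i}"
    using strict_mono_on_imp_inj_on[OF mono] i by (auto elim!: inj_on_subset)
  ultimately show ?thesis
    by (simp add: count_le_def card_image)
qed

lemma ent_le_iff_less_count_le:
  assumes A: "finite A" and i: "i < card A"
  shows "ent A i \<le> v \<longleftrightarrow> i < count_le A v"
proof
  assume "ent A i \<le> v"
  then show "i < count_le A v"
    using count_le_mono[OF A] count_le_ent[OF A i] by (metis Suc_le_lessD)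
next
  assume less: "i < count_le A v"
  show "ent A i \<le> v"
  proof (rule ccontr)
    assume "\<not> ent A i \<le> v"
    then have "count_le A v \<le> count_le A (ent A i - 1)"
      using count_le_mono[OF A] by simp
    also have "\<dots> = i"
      using count_le_step[OF A, of "ent A i"] count_le_ent[OF A i] ent_mem[OF A i] by simp
    finally show False using less by simp
  qed
qed

lemma count_le_shift_if_entries_le:
  assumes A: "finite A" "card A = m" and B: "finite B" "card B = m"
    and entries: "\<And>i. i < m - k \<Longrightarrow> ent A i \<le> ent B (k + i)"
  shows "count_le B v \<le> count_le A v + k"
proof (rule ccontr)
  assume "\<not> ?thesis"
  then have less: "count_le A v + k < count_le B v" by simp
  define i where "i = count_le B v - 1 - k"
  have i: "i < m - k" "k + i < card B"
    using less count_le_le_card[OF B(1), of v] B(2) by (auto simp: i_def)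
  have "ent B (k + i) \<le> v"
    using ent_le_iff_less_count_le[OF B(1) i(2)] less by (simp add: i_def)
  then have "ent A i \<le> v" using entries[OF i(1)] by simp
  then have "i < count_le A v"
    using ent_le_iff_less_count_le[OF A(1)] i(1) A(2) by simp
  then show False using less by (simp add: i_def)
qed

lemma entries_le_if_count_le_shift:
  assumes A: "finite A" "card A = m" and B: "finite B" "card B = m"
    and counts: "\<And>v. v \<in> B \<Longrightarrow> count_le B v \<le> count_le A v + k"
    and i: "i < m - k"
  shows "ent A i \<le> ent B (k + i)"
proof -
  have ki: "k + i < card B" using i B(2) by simp
  have "k + i < count_le B (ent B (k + i))"
    using ent_le_iff_less_count_le[OF B(1) ki, of "ent B (k + i)"] by simp
  then have "i < count_le A (ent B (k + i))"
    using counts[OF ent_mem[OF B(1) ki]] by simp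
  then show ?thesis
    using ent_le_iff_less_count_le[OF A(1)] i A(2) by simp
qed

section \<open>Height functions\<close>

definition height :: "elt \<Rightarrow> int \<Rightarrow> int" where
  "height x v = int (snd x) - int (count_le (fst x) v)"

text \<open>The least point \<open>-n-1\<close> of the window lies below \<open>\<langle>n\<rangle>\<close>, so the height there is the level.\<close>
definition window :: "nat \<Rightarrow> int set" where
  "window n = {- int n - 1 .. int n}"

lemma leq_iff_height:
  assumes x: "x \<in> P d n" and y: "y \<in> P d n"
  shows "leq n x y \<longleftrightarrow> (\<forall>v \<in> window n. height x v \<le> height y v)"
proof -
  obtain A a B b where xy: "x = (A, a)" "y = (B, b)" by fastforce
  have A: "A \<subseteq> signed_set n" "finite A" "card A = n" using P_memD[OF x] xy by auto
  have B: "B \<subseteq> signed_set n" "finite B" "card B = n" using P_memD[OF y] xy by auto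
  have height_le: "height x v \<le> height y v \<longleftrightarrow> count_le B v \<le> count_le A v + (b - a)"
    if "a \<le> b" for v
    using that by (auto simp: height_def xy)
  show ?thesis
  proof
    assume "leq n x y"
    then have "a \<le> b" and "\<forall>i < n - (b - a). ent A i \<le> ent B (b - a + i)"
      by (auto simp: leq_def xy)
    then show "\<forall>v \<in> window n. height x v \<le> height y v"
      using count_le_shift_if_entries_le[OF A(2,3) B(2,3)] height_le by blast
  next
    assume heights: "\<forall>v \<in> window n. height x v \<le> height y v"
    have "height x (int n) \<le> height y (int n)" using heights by (simp add: window_def)
    then have ab: "a \<le> b"
      using count_le_top[OF A(1)] count_le_top[OF B(1)] A(3) B(3) by (simp add: height_def xy)
    have "B \<subseteq> window n" using B(1) by (force simp: window_def signed_set_def)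
    then have "count_le B v \<le> count_le A v + (b - a)" if "v \<in> B" for v
      using heights height_le[OF ab] that by blast
    then have "ent A i \<le> ent B (b - a + i)" if "i < n - (b - a)" for i
      using entries_le_if_count_le_shift[OF A(2,3) B(2,3)] that by blast
    then show "leq n x y" using ab by (simp add: leq_def xy)
  qed
qed

lemma height_bottom: "x \<in> P d n \<Longrightarrow> height x (- int n - 1) = int (snd x)"
  using count_le_below[OF P_memD(1)] by (simp add: height_def)

lemma height_eq_on_window_imp_eq:
  assumes x: "x \<in> P d n" and y: "y \<in> P d n"
    and eq: "\<forall>v \<in> window n. height x v = height y v"
  shows "x = y"
proof -
  have snd_eq: "snd x = snd y"
    using eq height_bottom[OF x] height_bottom[OF y] by (force simp: window_def)
  then have count_eq: "count_le (fst x) v = count_le (fst y) v" if "v \<in> window n" for v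
    using eq that by (simp add: height_def)
  have "v \<in> fst x \<longleftrightarrow> v \<in> fst y" for v
  proof (cases "v \<in> signed_set n")
    case True
    then have "v \<in> window n" "v - 1 \<in> window n" by (auto simp: window_def signed_set_def)
    then have "count_le (fst x) v - count_le (fst x) (v - 1)
        = count_le (fst y) v - count_le (fst y) (v - 1)"
      using count_eq by simp
    then show ?thesis
      using count_le_step[OF P_memD(2)[OF x], of v] count_le_step[OF P_memD(2)[OF y], of v]
      by (simp split: if_splits)
  next
    case False
    then show ?thesis using P_memD(1)[OF x] P_memD(1)[OF y] by auto
  qed
  then show ?thesis using snd_eq by (simp add: prod_eq_iff set_eq_iff)
qed

text \<open>The reflection condition is the admissibility of \<open>\<alpha>\<close>: exactly one of \<open>i\<close> and \<open>-i\<close> lies in \<open>\<alpha>\<close>.\<close>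
definition height_profile :: "nat \<Rightarrow> nat \<Rightarrow> (int \<Rightarrow> int) \<Rightarrow> bool" where
  "height_profile d n H \<longleftrightarrow>
     (\<forall>v. - int n - 1 < v \<and> v \<le> int n \<longrightarrow> H v \<le> H (v - 1) \<and> H (v - 1) \<le> H v + 1) \<and>
     (\<forall>j. 1 \<le> j \<and> j \<le> int n + 1 \<longrightarrow> H (- j) = H (j - 1) + j - 1) \<and>
     0 \<le> H (- int n - 1) \<and> H (- int n - 1) \<le> int d"

lemma count_le_uminus:
  assumes A: "A \<subseteq> signed_set n" "finite A" "card A = n" "admissible n A"
    and j: "1 \<le> j" "j \<le> int n + 1"
  shows "int (count_le A (- j)) = int (count_le A (j - 1)) - j + 1"
  using j(2,1)
proof (induction j rule: int_le_induct)
  case base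
  then show ?case
    using count_le_below[OF A(1), of "- (int n + 1)"] count_le_top[OF A(1)] A(3) by simp
next
  case (step i)
  then have IH: "int (count_le A (- i)) = int (count_le A (i - 1)) - i + 1" by simp
  have "1 \<le> nat (i - 1)" "nat (i - 1) \<le> n" using step by auto
  then have "(i - 1 \<in> A) \<noteq> (- (i - 1) \<in> A)"
    using A(4) step.prems unfolding admissible_def by force
  then show ?case
    using IH count_le_step[OF A(2), of "- (i - 1)"] count_le_step[OF A(2), of "i - 1"]
    by (auto split: if_splits)
qed

lemma height_profile_height:
  assumes x: "x \<in> P d n"
  shows "height_profile d n (height x)"
  unfolding height_profile_def
proof (intro conjI allI impI)
  fix v
  show "height x v \<le> height x (v - 1)" "height x (v - 1) \<le> height x v + 1"
    using count_le_step[OF P_memD(2)[OF x], of v] by (auto simp: height_def)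
next
  fix j assume "1 \<le> j \<and> j \<le> int n + 1"
  then show "height x (- j) = height x (j - 1) + j - 1"
    using count_le_uminus[OF P_memD(1-3,5)[OF x]] by (simp add: height_def)
next
  show "0 \<le> height x (- int n - 1)" "height x (- int n - 1) \<le> int d"
    using height_bottom[OF x] P_memD(4)[OF x] by auto
qed

lemma height_profile_max:
  "height_profile d n H \<Longrightarrow> height_profile d n K \<Longrightarrow> height_profile d n (\<lambda>v. max (H v) (K v))"
  unfolding height_profile_def by (auto simp: max_def)

lemma height_profile_min:
  "height_profile d n H \<Longrightarrow> height_profile d n K \<Longrightarrow> height_profile d n (\<lambda>v. min (H v) (K v))"
  unfolding height_profile_def by (auto simp: min_def)

definition profile_support :: "nat \<Rightarrow> (int \<Rightarrow> int) \<Rightarrow> int set" where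
  "profile_support n H = {v \<in> signed_set n. H v < H (v - 1)}"

lemma count_le_profile_support:
  assumes H: "height_profile d n H" and v: "v \<in> window n"
  shows "int (count_le (profile_support n H) v) = H (- int n - 1) - H v"
proof -
  let ?C = "profile_support n H"
  have C: "?C \<subseteq> signed_set n" "finite ?C"
    using finite_signed_set by (auto simp: profile_support_def intro: finite_subset)
  have "- int n - 1 \<le> v" using v by (simp add: window_def)
  then show ?thesis using v
  proof (induction v rule: int_ge_induct)
    case base
    then show ?case using count_le_below[OF C(1)] by simp
  next
    case (step i)
    have IH: "int (count_le ?C i) = H (- int n - 1) - H i"
      using step by (simp add: window_def)
    have "- int n - 1 < i + 1 \<and> i + 1 \<le> int n"
      using step.hyps step.prems by (simp add: window_def)
    then have steps: "H (i + 1) \<le> H i" "H i \<le> H (i + 1) + 1"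
      using H unfolding height_profile_def by fastforce+
    have "H 0 = H (- 1)" \<comment> \<open>the reflection condition for \<open>j = 1\<close>\<close>
      using H unfolding height_profile_def by (force dest: spec[of _ 1])
    moreover have "i + 1 \<in> signed_set n \<or> i = - 1"
      using step.hyps step.prems by (auto simp: window_def signed_set_def)
    ultimately have "H (i + 1) = H i - (if i + 1 \<in> ?C then 1 else 0)"
      using steps by (auto simp: profile_support_def)
    then show ?case
      using IH count_le_step[OF C(2), of "i + 1"] by simp
  qed
qed

lemma admissible_profile_support:
  assumes H: "height_profile d n H"
  shows "admissible n (profile_support n H)"
  unfolding admissible_def
proof (intro allI impI)
  fix i :: nat
  assume "1 \<le> i \<and> i \<le> n"
  then have j: "1 \<le> int i" "int i \<le> int n" by auto
  have sym: "H (- int i) = H (int i - 1) + int i - 1" "H (- int i - 1) = H (int i) + int i"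
    using H j unfolding height_profile_def by (auto dest!: spec[of _ "int i + 1"])
  have "H (int i) \<le> H (int i - 1)" "H (int i - 1) \<le> H (int i) + 1"
    using H j unfolding height_profile_def by auto
  moreover have "int i \<in> signed_set n" "- int i \<in> signed_set n"
    using j by (auto simp: signed_set_def)
  ultimately show "(int i \<in> profile_support n H) \<noteq> (- int i \<in> profile_support n H)"
    using sym by (auto simp: profile_support_def)
qed

lemma height_profile_realised:
  assumes H: "height_profile d n H"
  shows "\<exists>z \<in> P d n. \<forall>v \<in> window n. height z v = H v"
proof -
  let ?C = "profile_support n H"
  let ?z = "(?C, nat (H (- int n - 1)))"
  have C: "?C \<subseteq> signed_set n" by (auto simp: profile_support_def)
  have bottom: "0 \<le> H (- int n - 1)" "H (- int n - 1) \<le> int d" "H (- int n - 1) = H (int n) + int n"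
    using H unfolding height_profile_def by (auto dest!: spec[of _ "int n + 1"])
  have "int (card ?C) = int n"
    using count_le_profile_support[OF H, of "int n"] count_le_top[OF C] bottom(3)
    by (simp add: window_def)
  then have "?z \<in> P d n"
    using C bottom admissible_profile_support[OF H] by (simp add: P_def binom_d_def nat_le_iff)
  moreover have "height ?z v = H v" if "v \<in> window n" for v
    using count_le_profile_support[OF H that] bottom(1) by (simp add: height_def)
  ultimately show ?thesis by blast
qed

lemma pointwise_embedding_P: "pointwise_embedding (P d n) (leq n) (window n) height"
proof
  fix x y assume x: "x \<in> P d n" and y: "y \<in> P d n"
  show "leq n x y \<longleftrightarrow> (\<forall>v \<in> window n. height x v \<le> height y v)"
    by (rule leq_iff_height[OF x y])
  show "\<forall>v \<in> window n. height x v = height y v \<Longrightarrow> x = y"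
    by (rule height_eq_on_window_imp_eq[OF x y])
  show "\<exists>z \<in> P d n. \<forall>v \<in> window n. height z v = max (height x v) (height y v)"
    using height_profile_realised height_profile_max height_profile_height[OF x]
      height_profile_height[OF y] by blast
  show "\<exists>z \<in> P d n. \<forall>v \<in> window n. height z v = min (height x v) (height y v)"
    using height_profile_realised height_profile_min height_profile_height[OF x]
      height_profile_height[OF y] by blast
qed

section \<open>The lattice \<open>P d n\<close> and its admissible pairs\<close>

lemma partial_order_P: "partial_order_on' (P d n) (leq n)"
  by (rule pointwise_embedding.partial_order[OF pointwise_embedding_P])

lemma finite_P: "finite (P d n)"
  by (rule finite_subset[of _ "Pow (signed_set n) \<times> {..d}"])
    (auto simp: P_def binom_d_def finite_signed_set)

lemma lt_trans: "x \<in> P d n \<Longrightarrow> y \<in> P d n \<Longrightarrow> z \<in> P d n \<Longrightarrow> lt n x y \<Longrightarrow> lt n y z \<Longrightarrow> lt n x z"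
  using partial_order_P unfolding partial_order_on'_def lt_def by blast

lemma covers_eq_covering: "covers d n = covering (P d n) (lt n)"
  by (simp add: fun_eq_iff covers_def covering_def)

definition level_negs :: "elt \<Rightarrow> nat \<times> nat" where
  "level_negs x = (snd x, negs (fst x))"

lemma cover_type1_iff: "cover_type1 d n x y \<longleftrightarrow> covers d n x y \<and> level_negs x = level_negs y"
  by (auto simp: cover_type1_def level_negs_def)

lemma negs_antitone:
  assumes x: "x \<in> P d n" and y: "y \<in> P d n" and "leq n x y" and "snd x = snd y"
  shows "negs (fst y) \<le> negs (fst x)"
proof -
  have "negs A = count_le A (- 1)" for A
    unfolding negs_def count_le_def by (rule arg_cong[where f = card]) auto
  moreover have "height x (- 1) \<le> height y (- 1)"
    using assms leq_iff_height[OF x y] by (simp add: window_def)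
  ultimately show ?thesis using assms(4) by (simp add: height_def)
qed

lemma level_negs_convex:
  assumes "x \<in> P d n" "y \<in> P d n" "z \<in> P d n" "leq n x y" "leq n y z"
    and "level_negs x = level_negs z"
  shows "level_negs y = level_negs x"
proof -
  have "snd x \<le> snd y" "snd y \<le> snd z" using assms(4,5) by (simp_all add: leq_def)
  then have "snd y = snd x" "snd z = snd y" using assms(6) by (simp_all add: level_negs_def)
  then show ?thesis
    using negs_antitone[OF assms(1,2,4)] negs_antitone[OF assms(2,3,5)] assms(6)
    by (simp add: level_negs_def)
qed

lemma level_negs_eq_if_admissible_pair:
  assumes "admissible_pair d n x y"
  shows "level_negs x = level_negs y"
proof -
  obtain gs where gs: "length gs \<ge> 2" "hd gs = x" "last gs = y"
    "successively (cover_type1 d n) gs"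
    using assms unfolding admissible_pair_def successively_conv_nth by blast
  have "successively (=) (map level_negs gs)"
    using gs(4) by (auto simp: successively_map cover_type1_iff elim: successively_mono)
  moreover have nonempty: "gs \<noteq> []" using gs(1) by auto
  ultimately have "hd (map level_negs gs) = last (map level_negs gs)"
    by (simp add: successively_eq_imp_hd_eq_last)
  then show ?thesis
    using gs(2,3) by (simp add: hd_map[OF nonempty] last_map[OF nonempty])
qed

lemma admissible_pair_if_level_negs_eq:
  assumes x: "x \<in> P d n" and y: "y \<in> P d n" and "lt n x y"
    and same: "level_negs x = level_negs y"
  shows "admissible_pair d n x y"
proof -
  have "\<exists>zs. successively (covering (P d n) (lt n)) (x # zs @ [y])"
  proof (rule saturated_chain_exists)
    show "\<not> lt n u u" for u by (simp add: lt_def)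
  qed (use finite_P lt_trans x y \<open>lt n x y\<close> in blast)+
  then obtain zs where chain: "successively (covering (P d n) (lt n)) (x # zs @ [y])" ..
  have "sorted_wrt (lt n) (x # zs @ [y]) \<and> set zs \<subseteq> P d n"
    using sorted_wrt_if_successively_covering[of "P d n" "lt n", OF lt_trans chain x] by simp
  then have "z \<in> P d n \<and> leq n x z \<and> leq n z y" if "z \<in> set zs" for z
    using that by (auto simp: lt_def sorted_wrt_append)
  then have "level_negs z = level_negs x" if "z \<in> set (x # zs @ [y])" for z
    using that level_negs_convex[OF x _ y _ _ same] same by (cases "z \<in> set zs") auto
  then have "successively (cover_type1 d n) (x # zs @ [y])"
    using chain by (auto simp: cover_type1_iff covers_eq_covering elim!: successively_mono)
  then show ?thesis
    using x y \<open>lt n x y\<close> same unfolding admissible_pair_def successively_conv_nth[symmetric]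
    by (intro conjI exI[of _ "x # zs @ [y]"]) (auto simp: level_negs_def)
qed

lemma D_eq: "D d n = {(x, y). x \<in> P d n \<and> y \<in> P d n \<and> leq n x y \<and> level_negs x = level_negs y}"
proof (intro set_eqI iffI)
  fix p assume "p \<in> D d n"
  then obtain x y where p: "p = (x, y)" and "x = y \<and> x \<in> P d n \<or> admissible_pair d n x y"
    by (auto simp: D_def)
  moreover have "leq n x x" if "x \<in> P d n"
    using partial_order_P that unfolding partial_order_on'_def by blast
  ultimately show "p \<in> {(x, y). x \<in> P d n \<and> y \<in> P d n \<and> leq n x y \<and> level_negs x = level_negs y}"
    using level_negs_eq_if_admissible_pair[of d n x y] by (auto simp: admissible_pair_def lt_def)
next
  fix p assume "p \<in> {(x, y). x \<in> P d n \<and> y \<in> P d n \<and> leq n x y \<and> level_negs x = level_negs y}"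
  then obtain x y where p: "p = (x, y)" and x: "x \<in> P d n" and y: "y \<in> P d n"
    and "leq n x y" "level_negs x = level_negs y" by blast
  then have "x = y \<or> admissible_pair d n x y"
    using admissible_pair_if_level_negs_eq[OF x y] by (auto simp: lt_def)
  then show "p \<in> D d n" using x unfolding p D_def by blast
qed

lemma doset_D: "doset (P d n) (leq n) (D d n)"
  unfolding D_eq using partial_order_P level_negs_convex by (rule doset_same_invariant)

theorem proposition3p16:
  fixes n d :: nat
  assumes "n \<ge> 1"
  shows "doset (P d n) (leq n) (D d n) \<and> distrib_lattice_on (P d n) (leq n)"
  using doset_D pointwise_embedding.distrib_lattice[OF pointwise_embedding_P] by (rule conjI)

end
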